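(* Let $K\in\mathcal S_n$ be nonempty and bounded and let $u\in S^{n-1}$. Assume that for every $x\in P_{u^\perp}(K)$, writing $K\cap(x+\mathbb Ru)=[x+su,x+tu]$, there exist $z,w\in\mathbb R^n$ such that the lens $L=B(z,1)\cap B(w,1)$ satisfies $K\subseteq L$, $x+tu\in\partial L$, $x+su\in\partial L$, and $S_u(L)\in\mathcal S_n$. Then $S_u(K)\in\mathcal S_n$.
   Context: For $x\in\mathbb R^n$, $B(x,1)$ is the closed Euclidean unit ball centered at $x$. The class $\mathcal S_n$ of ball-bodies consists of all intersections of families of closed Euclidean unit balls in $\mathbb R^n$. $P_{u^\perp}$ denotes orthogonal projection onto $u^\perp$. For a compact convex set $K$ and $u\in S^{n-1}$, for each $x\in P_{u^\perp}(K)$ write $K\cap(x+\mathbb Ru)=[x+a(x)u,x+b(x)u]$; the Steiner symmetral is $S_u(K)=\{x+yu: x\in P_{u^\perp}(K),\ |y|\le |b(x)-a(x)|/2\}$. *)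

theory Defs
  imports "HOL-Analysis.Analysis"
begin

definition ball_body :: "'a::euclidean_space set \<Rightarrow> bool" where
  "ball_body K \<longleftrightarrow> (\<exists>C. K = (\<Inter>z\<in>C. cball z 1))"

definition proj_perp :: "'a::euclidean_space \<Rightarrow> 'a \<Rightarrow> 'a" where
  "proj_perp u x = x - (x \<bullet> u) *\<^sub>R u"

definition chord_lo :: "'a::euclidean_space set \<Rightarrow> 'a \<Rightarrow> 'a \<Rightarrow> real" where
  "chord_lo K u x = Inf {t. x + t *\<^sub>R u \<in> K}"

definition chord_hi :: "'a::euclidean_space set \<Rightarrow> 'a \<Rightarrow> 'a \<Rightarrow> real" where
  "chord_hi K u x = Sup {t. x + t *\<^sub>R u \<in> K}"

definition steiner :: "'a::euclidean_space \<Rightarrow> 'a set \<Rightarrow> 'a set" where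
  "steiner u K = {x + y *\<^sub>R u | x y. x \<in> proj_perp u ` K \<and>
      \<bar>y\<bar> \<le> \<bar>chord_hi K u x - chord_lo K u x\<bar> / 2}"

end

(*
  Every point p outside S_u(K) has to be separated from S_u(K) by a unit ball. Write
  p = x + y u with x orthogonal to u.

  If the chord of K over x is a proper segment, the lens L of the hypothesis has the same chord
  over x: a boundary point of a lens is never interior to a segment contained in the lens. So p
  lies outside the ball-body S_u(L), which contains S_u(K).

  Otherwise x lies outside the projection of K, or the chord over x is a single point and then
  y <> 0. In both cases there is a normal n orthogonal to u with n.k <= n.p for all k in K,
  strictly if y = 0; for a point chord it comes from separating the line x + R u from the
  interior of K, which is nonempty unless K is a point. Take q in K maximising n.k. A ball-body
  lies in the unit ball supporting it at q with outer normal n, so S_u(K) lies in the unit ball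
  centred at the projection of q - n, and this ball misses p.
*)
theory Submission
  imports Defs
begin

section \<open>Ball-bodies\<close>

lemma ball_body_closed: "ball_body K \<Longrightarrow> closed K"
  unfolding ball_body_def by (auto intro!: closed_INT)

lemma ball_body_convex: "ball_body K \<Longrightarrow> convex K"
  unfolding ball_body_def by (auto intro!: convex_INT)

lemma ball_body_compact: "ball_body K \<Longrightarrow> bounded K \<Longrightarrow> compact K"
  using ball_body_closed compact_eq_bounded_closed by blast

lemma ball_body_iff_cballs_separate:
  "ball_body S \<longleftrightarrow> (\<forall>p. p \<notin> S \<longrightarrow> (\<exists>c. S \<subseteq> cball c 1 \<and> p \<notin> cball c 1))"
proof
  assume "ball_body S"
  then obtain C where "S = (\<Inter>c\<in>C. cball c 1)" unfolding ball_body_def by blast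
  then show "\<forall>p. p \<notin> S \<longrightarrow> (\<exists>c. S \<subseteq> cball c 1 \<and> p \<notin> cball c 1)" by blast
next
  assume "\<forall>p. p \<notin> S \<longrightarrow> (\<exists>c. S \<subseteq> cball c 1 \<and> p \<notin> cball c 1)"
  then have "S = (\<Inter>c\<in>{c. S \<subseteq> cball c 1}. cball c 1)" by blast
  then show "ball_body S" unfolding ball_body_def by blast
qed

lemma ball_body_singleton: "ball_body {a :: 'a::euclidean_space}"
  unfolding ball_body_iff_cballs_separate
proof (intro allI impI)
  fix p assume "p \<notin> {a}"
  then have pa: "norm (p - a) > 0" by simp
  define c where "c = a - sgn (p - a)"
  have "dist c p = norm (p - c)" by (simp add: dist_norm norm_minus_commute)
  also have "p - c = (norm (p - a) + 1) *\<^sub>R sgn (p - a)"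
    using pa by (simp add: c_def sgn_div_norm algebra_simps)
  finally have "dist c p = norm (p - a) + 1" using pa by (simp add: norm_sgn)
  moreover have "dist c a = 1" using pa by (simp add: c_def dist_norm norm_sgn)
  ultimately have "{a} \<subseteq> cball c 1 \<and> p \<notin> cball c 1" using pa by simp
  then show "\<exists>c. {a} \<subseteq> cball c 1 \<and> p \<notin> cball c 1" ..
qed

lemma norm_le_1_iff_inner_le_1: "norm x \<le> 1 \<longleftrightarrow> x \<bullet> x \<le> 1"
  by (metis abs_norm_cancel abs_square_le_1 power2_norm_eq_inner)

text \<open>The last hypothesis does not involve c: it is what remains of the squared inequality
  norm (q + \<beta>(k - q) + \<delta>v - c) \<le> 1 once the terms involving c are bounded using
  q, k \<in> cball c 1. Hence the point lies in every unit ball containing q and k.\<close>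
lemma perturbed_segment_point_in_cball:
  fixes q k v c :: "'a::real_inner"
  assumes "q \<in> cball c 1" "k \<in> cball c 1" "0 \<le> \<beta>" "\<beta> \<le> 1" "0 \<le> \<delta>" "norm v \<le> 1"
    and "2 * \<delta> + \<delta>\<^sup>2 + 2 * \<delta> * \<beta> * (v \<bullet> (k - q)) + \<beta>\<^sup>2 * (norm (k - q))\<^sup>2
           \<le> \<beta> * (norm (k - q))\<^sup>2"
  shows "q + \<beta> *\<^sub>R (k - q) + \<delta> *\<^sub>R v \<in> cball c 1"
proof -
  define a where "a = q - c"
  define w where "w = k - q"
  have aa: "a \<bullet> a \<le> 1" and aw: "(a + w) \<bullet> (a + w) \<le> 1" and vv: "v \<bullet> v \<le> 1"
    using assms(1,2,6) unfolding a_def w_def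
    by (simp_all add: dist_norm norm_minus_commute flip: norm_le_1_iff_inner_le_1)
  have av: "2 * (a \<bullet> v) \<le> a \<bullet> a + v \<bullet> v"
    using inner_ge_zero[of "a - v"] by (simp add: inner_diff_left inner_diff_right inner_commute)
  have expand: "(a + \<beta> *\<^sub>R w + \<delta> *\<^sub>R v) \<bullet> (a + \<beta> *\<^sub>R w + \<delta> *\<^sub>R v)
     = a \<bullet> a + \<beta>\<^sup>2 * (w \<bullet> w) + \<delta>\<^sup>2 * (v \<bullet> v) + 2 * \<beta> * (a \<bullet> w) + 2 * \<delta> * (a \<bullet> v)
       + 2 * \<beta> * \<delta> * (v \<bullet> w)"
    by (simp add: inner_add_left inner_add_right inner_commute power2_eq_square algebra_simps)
  have "2 * \<beta> * (a \<bullet> w) \<le> \<beta> * (1 - a \<bullet> a - w \<bullet> w)"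
    using mult_left_mono[OF _ assms(3), of "2 * (a \<bullet> w)" "1 - a \<bullet> a - w \<bullet> w"] aw
    by (simp add: inner_add_left inner_add_right inner_commute algebra_simps)
  moreover have "2 * \<delta> * (a \<bullet> v) \<le> \<delta> * (a \<bullet> a + 1)"
    using mult_left_mono[OF _ assms(5), of "2 * (a \<bullet> v)" "a \<bullet> a + 1"] av vv by (simp add: algebra_simps)
  moreover have "\<delta>\<^sup>2 * (v \<bullet> v) \<le> \<delta>\<^sup>2" using mult_left_mono[OF vv, of "\<delta>\<^sup>2"] by simp
  moreover have "(1 - \<beta> + \<delta>) * (a \<bullet> a) \<le> 1 - \<beta> + \<delta>"
    using mult_left_mono[OF aa, of "1 - \<beta> + \<delta>"] assms(4,5) by simp
  ultimately have "(a + \<beta> *\<^sub>R w + \<delta> *\<^sub>R v) \<bullet> (a + \<beta> *\<^sub>R w + \<delta> *\<^sub>R v) \<le> 1"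
    using assms(7) unfolding expand w_def[symmetric] power2_norm_eq_inner by (simp add: algebra_simps)
  moreover have "q + \<beta> *\<^sub>R (k - q) + \<delta> *\<^sub>R v - c = a + \<beta> *\<^sub>R w + \<delta> *\<^sub>R v"
    unfolding a_def w_def by (simp add: algebra_simps)
  ultimately have "norm (q + \<beta> *\<^sub>R (k - q) + \<delta> *\<^sub>R v - c) \<le> 1"
    by (simp only: norm_le_1_iff_inner_le_1)
  then show ?thesis by (simp add: dist_norm norm_minus_commute)
qed

lemma ball_body_perturbed_segment_mem:
  assumes "ball_body K" "q \<in> K" "k \<in> K" "0 \<le> \<beta>" "\<beta> \<le> 1" "0 \<le> \<delta>" "norm v \<le> 1"
    and "2 * \<delta> + \<delta>\<^sup>2 + 2 * \<delta> * \<beta> * (v \<bullet> (k - q)) + \<beta>\<^sup>2 * (norm (k - q))\<^sup>2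
           \<le> \<beta> * (norm (k - q))\<^sup>2"
  shows "q + \<beta> *\<^sub>R (k - q) + \<delta> *\<^sub>R v \<in> K"
proof -
  obtain C where K: "K = (\<Inter>c\<in>C. cball c 1)" using assms(1) unfolding ball_body_def by blast
  show ?thesis
    using perturbed_segment_point_in_cball[OF _ _ assms(4-8)] assms(2,3) unfolding K by blast
qed

text \<open>With e = W - 2p, the choice \<delta> = \<beta>(p + e/4) reduces the last inequality to
  \<beta>(e^2/16 - p^2 + W) \<le> e/2, which holds for \<beta> = e/(W + 1)^2.\<close>
lemma spindle_escape_parameters:
  fixes W p :: real
  assumes "0 \<le> p" "2 * p < W"
  obtains \<beta> \<delta> where "0 < \<beta>" "\<beta> \<le> 1" "0 \<le> \<delta>" "\<beta> * p < \<delta>"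
    and "2 * \<delta> + \<delta>\<^sup>2 - 2 * \<delta> * \<beta> * p + \<beta>\<^sup>2 * W \<le> \<beta> * W"
proof -
  define e where "e = W - 2 * p"
  have "0 < e" "e \<le> W" using assms by (simp_all add: e_def)
  define \<beta> where "\<beta> = e / (W + 1)\<^sup>2"
  define \<delta> where "\<delta> = \<beta> * (p + e / 4)"
  have \<beta>: "0 < \<beta>" "\<beta> * (W + 1)\<^sup>2 = e"
    using \<open>0 < e\<close> \<open>e \<le> W\<close> by (simp_all add: \<beta>_def)
  have "e \<le> (W + 1)\<^sup>2"
    using \<open>0 < e\<close> \<open>e \<le> W\<close> zero_le_power2[of W]
    unfolding power2_sum power_one mult_1_right by linarith
  then have "\<beta> \<le> 1" using \<open>0 < e\<close> \<open>e \<le> W\<close> by (simp add: \<beta>_def)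
  have "\<beta> * (e\<^sup>2 / 16 - p\<^sup>2 + W) \<le> \<beta> * ((W + 1)\<^sup>2 / 2)"
  proof (rule mult_left_mono)
    have "e\<^sup>2 \<le> W\<^sup>2" using \<open>0 < e\<close> \<open>e \<le> W\<close> by (simp add: power_mono)
    then show "e\<^sup>2 / 16 - p\<^sup>2 + W \<le> (W + 1)\<^sup>2 / 2"
      using zero_le_power2[of p] zero_le_power2[of W]
      unfolding power2_sum power_one mult_1_right add_divide_distrib by linarith
  qed (use \<beta> in simp)
  then have "\<beta> * (\<beta> * (e\<^sup>2 / 16 - p\<^sup>2 + W) - e / 2) \<le> 0"
    using \<beta> by (simp add: mult_nonneg_nonpos)
  moreover have "2 * \<delta> + \<delta>\<^sup>2 - 2 * \<delta> * \<beta> * p + \<beta>\<^sup>2 * W - \<beta> * W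
      = \<beta> * (\<beta> * (e\<^sup>2 / 16 - p\<^sup>2 + W) - e / 2)"
  proof -
    have "W = e + 2 * p" by (simp add: e_def)
    moreover have "2 * \<delta> + \<delta>\<^sup>2 - 2 * \<delta> * \<beta> * p + \<beta>\<^sup>2 * (e + 2 * p) - \<beta> * (e + 2 * p)
        = \<beta> * (\<beta> * (e\<^sup>2 / 16 - p\<^sup>2 + (e + 2 * p)) - e / 2)"
      unfolding \<delta>_def by (simp add: power2_eq_square algebra_simps)
    ultimately show ?thesis by (simp only:)
  qed
  ultimately have "2 * \<delta> + \<delta>\<^sup>2 - 2 * \<delta> * \<beta> * p + \<beta>\<^sup>2 * W \<le> \<beta> * W" by linarith
  moreover have "\<beta> * p < \<delta>" using \<beta>(1) \<open>0 < e\<close> by (simp add: \<delta>_def algebra_simps)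
  moreover have "0 \<le> \<delta>" using \<beta>(1) assms(1) \<open>0 < e\<close> by (simp add: \<delta>_def)
  ultimately show ?thesis using that \<beta>(1) \<open>\<beta> \<le> 1\<close> by blast
qed

text \<open>If some k \<in> K lay outside this ball, a point near q, moved slightly towards k and in
  direction \<nu>, would still lie in K but beyond the supporting hyperplane.\<close>
lemma ball_body_subset_supporting_cball:
  assumes "ball_body K" "q \<in> K" "norm \<nu> = 1" "\<forall>k\<in>K. \<nu> \<bullet> k \<le> \<nu> \<bullet> q"
  shows "K \<subseteq> cball (q - \<nu>) 1"
proof
  fix k assume k: "k \<in> K"
  show "k \<in> cball (q - \<nu>) 1"
  proof (rule ccontr)
    define p where "p = - (\<nu> \<bullet> (k - q))"
    assume "k \<notin> cball (q - \<nu>) 1"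
    then have "1 < (norm (k - q + \<nu>))\<^sup>2"
      by (simp add: dist_norm norm_minus_commute algebra_simps abs_square_less_1[symmetric])
    also have "(norm (k - q + \<nu>))\<^sup>2 = (norm (k - q))\<^sup>2 - 2 * p + 1"
      using assms(3) unfolding p_def power2_norm_eq_inner norm_eq_1
      by (simp add: inner_add_left inner_add_right inner_commute)
    finally have "2 * p < (norm (k - q))\<^sup>2" by simp
    moreover have "0 \<le> p" using assms(4) k by (simp add: p_def inner_diff_right)
    ultimately obtain \<beta> \<delta> where "0 < \<beta>" "\<beta> \<le> 1" "0 \<le> \<delta>" "\<beta> * p < \<delta>"
      and "2 * \<delta> + \<delta>\<^sup>2 - 2 * \<delta> * \<beta> * p + \<beta>\<^sup>2 * (norm (k - q))\<^sup>2 \<le> \<beta> * (norm (k - q))\<^sup>2"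
      using spindle_escape_parameters by metis
    then have "q + \<beta> *\<^sub>R (k - q) + \<delta> *\<^sub>R \<nu> \<in> K"
      using ball_body_perturbed_segment_mem[OF assms(1,2) k] assms(3) by (simp add: p_def)
    then have "\<nu> \<bullet> (q + \<beta> *\<^sub>R (k - q) + \<delta> *\<^sub>R \<nu>) \<le> \<nu> \<bullet> q" using assms(4) by blast
    moreover have "\<nu> \<bullet> (q + \<beta> *\<^sub>R (k - q) + \<delta> *\<^sub>R \<nu>) = \<nu> \<bullet> q - \<beta> * p + \<delta>"
      using assms(3) by (simp add: p_def inner_add_right dot_square_norm)
    ultimately show False using \<open>\<beta> * p < \<delta>\<close> by linarith
  qed
qed

lemma ball_body_interior_nonempty:
  fixes K :: "'a::euclidean_space set"
  assumes "ball_body K" "q \<in> K" "k \<in> K" "q \<noteq> k"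
  shows "interior K \<noteq> {}"
proof -
  define n where "n = norm (k - q)"
  have "0 < n" using assms(4) by (simp add: n_def)
  define \<delta> where "\<delta> = n\<^sup>2 / (4 * (3 + n)\<^sup>2)"
  have "0 < \<delta>" using \<open>0 < n\<close> by (simp add: \<delta>_def)
  have "n\<^sup>2 \<le> 4 * (3 + n)\<^sup>2" using \<open>0 < n\<close> by (simp add: power2_eq_square algebra_simps)
  then have "\<delta> \<le> 1" using \<open>0 < n\<close> by (simp add: \<delta>_def)
  have "\<delta> * (3 + n) = n\<^sup>2 / (4 * (3 + n))"
    using \<open>0 < n\<close> by (simp add: \<delta>_def power2_eq_square)
  also have "\<dots> \<le> n\<^sup>2 / 4" using \<open>0 < n\<close> by (intro divide_left_mono) auto
  finally have "\<delta> * (3 + n) \<le> n\<^sup>2 / 4" .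
  define m where "m = q + (1/2) *\<^sub>R (k - q)"
  have "ball m \<delta> \<subseteq> K"
  proof
    fix y assume "y \<in> ball m \<delta>"
    define v where "v = (1 / \<delta>) *\<^sub>R (y - m)"
    have y: "y = q + (1/2) *\<^sub>R (k - q) + \<delta> *\<^sub>R v"
      using \<open>0 < \<delta>\<close> by (simp add: v_def m_def)
    have v: "norm v \<le> 1"
      using \<open>y \<in> ball m \<delta>\<close> \<open>0 < \<delta>\<close> by (simp add: v_def dist_norm norm_minus_commute divide_le_eq)
    have "\<delta> * (v \<bullet> (k - q)) \<le> \<delta> * n"
      using norm_cauchy_schwarz[of v "k - q"] mult_right_mono[OF v, of n] \<open>0 < \<delta>\<close>
      by (simp add: n_def)
    moreover have "\<delta>\<^sup>2 \<le> \<delta>" using \<open>0 < \<delta>\<close> \<open>\<delta> \<le> 1\<close> by (simp add: power2_eq_square)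
    ultimately have "2 * \<delta> + \<delta>\<^sup>2 + 2 * \<delta> * (1/2) * (v \<bullet> (k - q)) + (1/2)\<^sup>2 * (norm (k - q))\<^sup>2
        \<le> (1/2) * (norm (k - q))\<^sup>2"
      using \<open>\<delta> * (3 + n) \<le> n\<^sup>2 / 4\<close> unfolding n_def[symmetric] by (simp add: algebra_simps power2_eq_square)
    then show "y \<in> K"
      unfolding y using ball_body_perturbed_segment_mem[OF assms(1-3) _ _ _ v] \<open>0 < \<delta>\<close> by simp
  qed
  then show ?thesis using \<open>0 < \<delta>\<close> interior_maximal[OF \<open>ball m \<delta> \<subseteq> K\<close>] by force
qed

section \<open>Projection, chords and the Steiner symmetral\<close>

lemma linear_proj_perp: "linear (proj_perp u)"
  unfolding proj_perp_def by (intro linearI) (simp_all add: inner_add_left algebra_simps)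

lemma proj_perp_orthogonal: "norm u = 1 \<Longrightarrow> proj_perp u x \<bullet> u = 0"
  unfolding proj_perp_def by (simp add: inner_diff_left dot_square_norm)

lemma proj_perp_add_scaleR: "norm u = 1 \<Longrightarrow> proj_perp u (x + r *\<^sub>R u) = proj_perp u x"
  unfolding proj_perp_def by (simp add: inner_add_left dot_square_norm algebra_simps)

lemma proj_perp_eq_self: "x \<bullet> u = 0 \<Longrightarrow> proj_perp u x = x"
  unfolding proj_perp_def by simp

lemma proj_perp_add_inner_scaleR: "proj_perp u x + (x \<bullet> u) *\<^sub>R u = x"
  unfolding proj_perp_def by simp

lemma inner_proj_perp_commute: "norm u = 1 \<Longrightarrow> proj_perp u a \<bullet> x = a \<bullet> proj_perp u x"
  unfolding proj_perp_def by (simp add: inner_diff_left inner_diff_right inner_commute)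

lemma norm_orthogonal_add_scaleR:
  assumes "d \<bullet> u = 0" "norm u = 1"
  shows "(norm (d + r *\<^sub>R u))\<^sup>2 = (norm d)\<^sup>2 + r\<^sup>2"
  using norm_add_Pythagorean[of d "r *\<^sub>R u"] assms by (simp add: orthogonal_def)

lemma closed_segment_on_line:
  fixes x u :: "'a::real_vector"
  assumes "s \<le> t"
  shows "closed_segment (x + s *\<^sub>R u) (x + t *\<^sub>R u) = (\<lambda>r. x + r *\<^sub>R u) ` {s..t}"
proof -
  have "closed_segment (s *\<^sub>R u) (t *\<^sub>R u) = (\<lambda>r. r *\<^sub>R u) ` closed_segment s t"
    by (rule closed_segment_linear_image) (simp add: linear_scaleR_left)
  then show ?thesis
    using assms by (simp add: closed_segment_translation closed_segment_eq_real_ivl image_image)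
qed

lemma open_segment_on_line:
  fixes x u :: "'a::real_vector"
  assumes "u \<noteq> 0" "r < s" "s < t"
  shows "x + s *\<^sub>R u \<in> open_segment (x + r *\<^sub>R u) (x + t *\<^sub>R u)"
  using assms closed_segment_on_line[of r t x u] by (auto simp: open_segment_def)

lemma proj_perp_mem_image_of_line:
  "norm u = 1 \<Longrightarrow> proj_perp u p + s *\<^sub>R u \<in> K \<Longrightarrow> proj_perp u p \<in> proj_perp u ` K"
  using proj_perp_add_scaleR proj_perp_orthogonal proj_perp_eq_self by (metis image_eqI)

lemma notin_cball_proj_perp_shifted:
  assumes "norm u = 1" "norm n = 1" "n \<bullet> u = 0" "n \<bullet> q \<le> n \<bullet> p" "p \<bullet> u \<noteq> 0 \<or> n \<bullet> q < n \<bullet> p"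
  shows "p \<notin> cball (proj_perp u q - n) 1"
proof
  define d where "d = proj_perp u p - proj_perp u q + n"
  have "d \<bullet> u = 0"
    using proj_perp_orthogonal[OF assms(1)] assms(3) by (simp add: d_def inner_diff_left inner_add_left)
  have "n \<bullet> d = 1 + (n \<bullet> p - n \<bullet> q)"
    using assms(2,3) by (simp add: d_def proj_perp_def inner_diff_right inner_add_right dot_square_norm)
  moreover have "n \<bullet> d \<le> norm d" using norm_cauchy_schwarz[of n d] assms(2) by simp
  ultimately have "(1 + (n \<bullet> p - n \<bullet> q))\<^sup>2 \<le> (norm d)\<^sup>2" using assms(4) by (intro power_mono) auto
  moreover have "1 < (1 + (n \<bullet> p - n \<bullet> q))\<^sup>2 + (p \<bullet> u)\<^sup>2"
  proof (cases "p \<bullet> u = 0")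
    case True
    then have "1 < (1 + (n \<bullet> p - n \<bullet> q))\<^sup>2" using assms(5) by (simp add: one_less_power)
    then show ?thesis using True by simp
  next
    case False
    then have "0 < (p \<bullet> u)\<^sup>2" by simp
    moreover have "1 \<le> (1 + (n \<bullet> p - n \<bullet> q))\<^sup>2" using assms(4) by (simp add: one_le_power)
    ultimately show ?thesis by linarith
  qed
  moreover have "(norm d)\<^sup>2 + (p \<bullet> u)\<^sup>2 = (dist p (proj_perp u q - n))\<^sup>2"
    using norm_orthogonal_add_scaleR[OF \<open>d \<bullet> u = 0\<close> assms(1), of "p \<bullet> u"] proj_perp_add_inner_scaleR[of u p]
    by (simp add: d_def dist_norm algebra_simps)
  moreover assume "p \<in> cball (proj_perp u q - n) 1"
  then have "(dist p (proj_perp u q - n))\<^sup>2 \<le> 1" by (simp add: dist_commute power_le_one)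
  ultimately show False by linarith
qed

lemma chord_eq_interval:
  fixes K :: "'a::euclidean_space set"
  assumes "compact K" "convex K" "norm u = 1" "x \<in> proj_perp u ` K"
  shows "{t. x + t *\<^sub>R u \<in> K} = {chord_lo K u x..chord_hi K u x}"
    and "chord_lo K u x \<le> chord_hi K u x"
proof -
  define T where "T = (\<lambda>t. x + t *\<^sub>R u) -` K"
  obtain k where k: "k \<in> K" "x = proj_perp u k" using assms(4) by blast
  then have "k \<bullet> u \<in> T" unfolding T_def using proj_perp_add_inner_scaleR[of u k] by simp
  then have ne: "T \<noteq> {}" by blast
  have "closed T" unfolding T_def
    by (rule continuous_closed_vimage[OF compact_imp_closed[OF assms(1)]]) (intro continuous_intros)
  moreover have "bounded T"
  proof -
    have "T \<subseteq> (\<lambda>v. (v - x) \<bullet> u) ` K"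
      unfolding T_def using assms(3) by (force simp: inner_add_left dot_square_norm)
    moreover have "compact ((\<lambda>v. (v - x) \<bullet> u) ` K)"
      by (rule compact_continuous_image[OF _ assms(1)]) (intro continuous_intros)
    ultimately show ?thesis using bounded_subset compact_imp_bounded by blast
  qed
  moreover have "convex T"
  proof (rule convexI)
    fix s t a b :: real assume "s \<in> T" "t \<in> T" "0 \<le> a" "0 \<le> b" "a + b = 1"
    moreover have "x + (a * s + b * t) *\<^sub>R u = a *\<^sub>R (x + s *\<^sub>R u) + b *\<^sub>R (x + t *\<^sub>R u)"
      using \<open>a + b = 1\<close> by (simp add: algebra_simps flip: scaleR_add_left)
    ultimately show "a *\<^sub>R s + b *\<^sub>R t \<in> T"
      unfolding T_def using convexD[OF assms(2)] by simp
  qed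
  ultimately obtain a b where ab: "T = {a..b}"
    using connected_compact_interval_1 convex_connected compact_eq_bounded_closed by metis
  with ne have "a \<le> b" by simp
  moreover have "chord_lo K u x = Inf T" "chord_hi K u x = Sup T"
    unfolding chord_lo_def chord_hi_def T_def by (simp_all add: vimage_def)
  ultimately show "{t. x + t *\<^sub>R u \<in> K} = {chord_lo K u x..chord_hi K u x}"
    and "chord_lo K u x \<le> chord_hi K u x"
    using ab unfolding T_def by (simp_all add: vimage_def)
qed

lemma line_section_cases:
  fixes K :: "'a::euclidean_space set"
  assumes "compact K" "convex K" "norm u = 1"
  obtains (outside) "x \<notin> proj_perp u ` K"
    | (point) s where "{r. x + r *\<^sub>R u \<in> K} = {s}"
    | (segment) s t where "x \<in> proj_perp u ` K" "{r. x + r *\<^sub>R u \<in> K} = {s..t}" "s < t"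
proof (cases "x \<in> proj_perp u ` K")
  case x: True
  note chord = chord_eq_interval[OF assms x]
  show ?thesis
  proof (cases "chord_lo K u x = chord_hi K u x")
    case True
    then show ?thesis using point chord(1) by simp
  next
    case False
    then show ?thesis using segment x chord by simp
  qed
qed (use outside in blast)

lemma Int_line_eq_closed_segment:
  fixes x u :: "'a::real_vector"
  assumes "{r. x + r *\<^sub>R u \<in> K} = {s..t}" "s \<le> t"
  shows "K \<inter> {x + r *\<^sub>R u | r. True} = closed_segment (x + s *\<^sub>R u) (x + t *\<^sub>R u)"
proof -
  have "x + r *\<^sub>R u \<in> K \<longleftrightarrow> r \<in> {s..t}" for r using assms(1) unfolding set_eq_iff by simp
  then have "K \<inter> {x + r *\<^sub>R u | r. True} = (\<lambda>r. x + r *\<^sub>R u) ` {s..t}" by blast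
  then show ?thesis using closed_segment_on_line[OF assms(2), of x u] by simp
qed

lemma line_disjoint_interior_if_point_chord:
  fixes x u :: "'a::real_normed_vector"
  assumes "u \<noteq> 0" "{r. x + r *\<^sub>R u \<in> K} = {s}"
  shows "x + r *\<^sub>R u \<notin> interior K"
proof
  assume "x + r *\<^sub>R u \<in> interior K"
  then obtain \<epsilon> where "0 < \<epsilon>" "ball (x + r *\<^sub>R u) \<epsilon> \<subseteq> K" by (meson mem_interior)
  moreover have "x + (r + \<epsilon> / (2 * norm u)) *\<^sub>R u \<in> ball (x + r *\<^sub>R u) \<epsilon>"
    using \<open>0 < \<epsilon>\<close> assms(1) by (simp add: dist_norm algebra_simps)
  ultimately have "x + r *\<^sub>R u \<in> K" "x + (r + \<epsilon> / (2 * norm u)) *\<^sub>R u \<in> K" by auto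
  then show False using assms \<open>0 < \<epsilon>\<close> unfolding set_eq_iff by simp
qed

lemma mem_steiner_iff:
  assumes "norm u = 1"
  shows "p \<in> steiner u K \<longleftrightarrow> proj_perp u p \<in> proj_perp u ` K \<and>
    \<bar>p \<bullet> u\<bar> \<le> \<bar>chord_hi K u (proj_perp u p) - chord_lo K u (proj_perp u p)\<bar> / 2"
proof
  assume "p \<in> steiner u K"
  then obtain x y where p: "p = x + y *\<^sub>R u" "x \<in> proj_perp u ` K"
    and y: "\<bar>y\<bar> \<le> \<bar>chord_hi K u x - chord_lo K u x\<bar> / 2"
    unfolding steiner_def by blast
  then have "x \<bullet> u = 0" using proj_perp_orthogonal[OF assms] by blast
  then have "proj_perp u p = x" "p \<bullet> u = y"
    using assms unfolding p(1) proj_perp_def by (simp_all add: inner_add_left dot_square_norm)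
  then show "proj_perp u p \<in> proj_perp u ` K \<and>
    \<bar>p \<bullet> u\<bar> \<le> \<bar>chord_hi K u (proj_perp u p) - chord_lo K u (proj_perp u p)\<bar> / 2"
    using p(2) y by simp
next
  assume "proj_perp u p \<in> proj_perp u ` K \<and>
    \<bar>p \<bullet> u\<bar> \<le> \<bar>chord_hi K u (proj_perp u p) - chord_lo K u (proj_perp u p)\<bar> / 2"
  moreover have "p = proj_perp u p + (p \<bullet> u) *\<^sub>R u" by (simp add: proj_perp_add_inner_scaleR)
  ultimately show "p \<in> steiner u K" unfolding steiner_def by blast
qed

lemma steiner_singleton:
  assumes "norm u = 1"
  shows "steiner u {q} = {proj_perp u q}"
proof (rule set_eqI)
  fix p
  have "proj_perp u q + t *\<^sub>R u = q \<longleftrightarrow> t = q \<bullet> u" for t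
    using assms unfolding proj_perp_def by (auto simp: inner_add_left dot_square_norm)
  then have "{t. proj_perp u q + t *\<^sub>R u \<in> {q}} = {q \<bullet> u}" by auto
  then have "chord_lo {q} u (proj_perp u q) = chord_hi {q} u (proj_perp u q)"
    unfolding chord_lo_def chord_hi_def by simp
  then have "p \<in> steiner u {q} \<longleftrightarrow> proj_perp u p = proj_perp u q \<and> p \<bullet> u = 0"
    unfolding mem_steiner_iff[OF assms] by auto
  also have "\<dots> \<longleftrightarrow> p = proj_perp u q"
  proof
    assume "proj_perp u p = proj_perp u q \<and> p \<bullet> u = 0"
    then show "p = proj_perp u q" using proj_perp_add_inner_scaleR[of u p] by simp
  next
    assume "p = proj_perp u q"
    then show "proj_perp u p = proj_perp u q \<and> p \<bullet> u = 0"
      using proj_perp_orthogonal[OF assms, of q] by (simp add: proj_perp_eq_self)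
  qed
  finally show "p \<in> steiner u {q} \<longleftrightarrow> p \<in> {proj_perp u q}" by simp
qed

lemma steiner_mono:
  fixes K L :: "'a::euclidean_space set"
  assumes "K \<subseteq> L" "compact K" "convex K" "compact L" "convex L" "norm u = 1"
  shows "steiner u K \<subseteq> steiner u L"
proof
  fix p assume "p \<in> steiner u K"
  then have x: "proj_perp u p \<in> proj_perp u ` K"
    and y: "\<bar>p \<bullet> u\<bar> \<le> \<bar>chord_hi K u (proj_perp u p) - chord_lo K u (proj_perp u p)\<bar> / 2"
    unfolding mem_steiner_iff[OF assms(6)] by auto
  have "{chord_lo K u (proj_perp u p)..chord_hi K u (proj_perp u p)}
      \<subseteq> {chord_lo L u (proj_perp u p)..chord_hi L u (proj_perp u p)}"
    using assms(1) x chord_eq_interval[OF assms(2,3,6) x] chord_eq_interval[OF assms(4,5,6)] by blast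
  then have "\<bar>chord_hi K u (proj_perp u p) - chord_lo K u (proj_perp u p)\<bar>
      \<le> \<bar>chord_hi L u (proj_perp u p) - chord_lo L u (proj_perp u p)\<bar>"
    using chord_eq_interval(2)[OF assms(2,3,6) x] by auto
  then show "p \<in> steiner u L"
    unfolding mem_steiner_iff[OF assms(6)] using x y assms(1) by auto
qed

lemma steiner_subset_cball:
  fixes K :: "'a::euclidean_space set"
  assumes "compact K" "convex K" "norm u = 1" "K \<subseteq> cball c 1"
  shows "steiner u K \<subseteq> cball (proj_perp u c) 1"
proof
  fix p assume "p \<in> steiner u K"
  define x where "x = proj_perp u p"
  define lo where "lo = chord_lo K u x"
  define hi where "hi = chord_hi K u x"
  have x: "x \<in> proj_perp u ` K" and y: "\<bar>p \<bullet> u\<bar> \<le> (hi - lo) / 2"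
    using \<open>p \<in> steiner u K\<close> chord_eq_interval(2)[OF assms(1-3)]
    unfolding mem_steiner_iff[OF assms(3)] x_def lo_def hi_def by auto
  have chord: "x + r *\<^sub>R u \<in> K \<longleftrightarrow> lo \<le> r \<and> r \<le> hi" for r
    using chord_eq_interval(1)[OF assms(1-3) x] unfolding lo_def hi_def set_eq_iff by simp
  define d where "d = x - proj_perp u c"
  have du: "d \<bullet> u = 0"
    unfolding d_def x_def using proj_perp_orthogonal[OF assms(3)] by (simp add: inner_diff_left)
  have norm_le_1: "norm (d + r *\<^sub>R u) \<le> 1 \<longleftrightarrow> (norm d)\<^sup>2 + r\<^sup>2 \<le> 1" for r
    unfolding norm_orthogonal_add_scaleR[OF du assms(3), symmetric] by (simp add: abs_square_le_1)
  have in_cball: "(norm d)\<^sup>2 + (r - c \<bullet> u)\<^sup>2 \<le> 1" if "lo \<le> r" "r \<le> hi" for r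
  proof -
    have "x + r *\<^sub>R u \<in> cball c 1" using chord that assms(4) by blast
    then have "norm (x + r *\<^sub>R u - c) \<le> 1" by (simp add: dist_norm norm_minus_commute)
    moreover have "x + r *\<^sub>R u - c = d + (r - c \<bullet> u) *\<^sub>R u"
      unfolding d_def proj_perp_def by (simp add: algebra_simps)
    ultimately show ?thesis using norm_le_1 by simp
  qed
  have "lo \<le> hi" using chord_eq_interval(2)[OF assms(1-3) x] by (simp add: lo_def hi_def)
  then have "(norm d)\<^sup>2 + (lo - c \<bullet> u)\<^sup>2 \<le> 1" "(norm d)\<^sup>2 + (hi - c \<bullet> u)\<^sup>2 \<le> 1"
    using in_cball by auto
  moreover have "(p \<bullet> u)\<^sup>2 \<le> (lo - c \<bullet> u)\<^sup>2 \<or> (p \<bullet> u)\<^sup>2 \<le> (hi - c \<bullet> u)\<^sup>2"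
    unfolding abs_le_square_iff[symmetric] using y by (auto simp: abs_if split: if_splits)
  ultimately have "norm (d + (p \<bullet> u) *\<^sub>R u) \<le> 1" unfolding norm_le_1 by linarith
  moreover have "d + (p \<bullet> u) *\<^sub>R u = p - proj_perp u c"
    unfolding d_def x_def proj_perp_def by simp
  ultimately show "p \<in> cball (proj_perp u c) 1" by (simp add: dist_norm norm_minus_commute)
qed

section \<open>Chords of lenses\<close>

lemma frontier_lens_notin_open_segment:
  fixes z w :: "'a::euclidean_space"
  assumes "a \<in> frontier (cball z \<rho> \<inter> cball w \<sigma>)"
    and "b \<in> cball z \<rho> \<inter> cball w \<sigma>" "b' \<in> cball z \<rho> \<inter> cball w \<sigma>"
  shows "a \<notin> open_segment b b'"
proof
  assume "a \<in> open_segment b b'"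
  then have "dist z a < \<rho>" "dist w a < \<sigma>"
    using dist_decreases_open_segment[of a b b' z] dist_decreases_open_segment[of a b b' w] assms(2,3)
    by auto
  then have "a \<in> interior (cball z \<rho> \<inter> cball w \<sigma>)"
    using interior_maximal[of "ball z \<rho> \<inter> ball w \<sigma>" "cball z \<rho> \<inter> cball w \<sigma>"] by auto
  then show False using assms(1) by (simp add: frontier_def)
qed

lemma chord_of_lens:
  fixes z w :: "'a::euclidean_space" and \<rho> \<sigma> :: real
  defines "L \<equiv> cball z \<rho> \<inter> cball w \<sigma>"
  assumes "u \<noteq> 0" "s < t" "x + s *\<^sub>R u \<in> frontier L" "x + t *\<^sub>R u \<in> frontier L"
  shows "{r. x + r *\<^sub>R u \<in> L} = {s..t}"
proof (intro equalityI subsetI)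
  have "closed L" by (simp add: L_def closed_Int)
  then have ends: "x + s *\<^sub>R u \<in> L" "x + t *\<^sub>R u \<in> L"
    using assms(4,5) frontier_subset_closed by blast+
  fix r
  show "r \<in> {s..t}" if "r \<in> {r. x + r *\<^sub>R u \<in> L}"
  proof (rule ccontr)
    assume "r \<notin> {s..t}"
    then have "x + s *\<^sub>R u \<in> open_segment (x + r *\<^sub>R u) (x + t *\<^sub>R u) \<or>
        x + t *\<^sub>R u \<in> open_segment (x + s *\<^sub>R u) (x + r *\<^sub>R u)"
      using open_segment_on_line[OF assms(2)] assms(3) by force
    then show False
      using frontier_lens_notin_open_segment that ends assms(4,5) unfolding L_def by blast
  qed
  show "r \<in> {r. x + r *\<^sub>R u \<in> L}" if "r \<in> {s..t}"
  proof -
    have "convex L" by (simp add: L_def convex_Int)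
    then have "closed_segment (x + s *\<^sub>R u) (x + t *\<^sub>R u) \<subseteq> L"
      using ends by (simp add: closed_segment_subset)
    then have "(\<lambda>r. x + r *\<^sub>R u) ` {s..t} \<subseteq> L"
      using closed_segment_on_line[of s t x u] assms(3) by simp
    then show ?thesis using that by blast
  qed
qed

section \<open>Separating points from the symmetral by unit balls\<close>

lemma orthogonal_support_outside_projection:
  fixes K :: "'a::euclidean_space set"
  assumes "compact K" "convex K" "K \<noteq> {}" "norm u = 1" "proj_perp u p \<notin> proj_perp u ` K"
  obtains \<nu> where "\<nu> \<noteq> 0" "\<nu> \<bullet> u = 0" "\<forall>k\<in>K. \<nu> \<bullet> k < \<nu> \<bullet> p"
proof -
  have "convex (proj_perp u ` K)" by (rule convex_linear_image[OF linear_proj_perp assms(2)])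
  moreover have "continuous_on K (proj_perp u)" unfolding proj_perp_def by (intro continuous_intros)
  then have "closed (proj_perp u ` K)"
    using compact_continuous_image[OF _ assms(1)] compact_imp_closed by blast
  ultimately obtain a b where ab: "a \<bullet> proj_perp u p < b" "\<forall>v\<in>proj_perp u ` K. b < a \<bullet> v"
    using separating_hyperplane_closed_point[OF _ _ assms(5)] by meson
  define \<nu> where "\<nu> = - proj_perp u a"
  have "\<nu> \<bullet> k < \<nu> \<bullet> p" if "k \<in> K" for k
    using ab that inner_proj_perp_commute[OF assms(4), of a] by (fastforce simp: \<nu>_def)
  moreover from this obtain k where "k \<in> K" "\<nu> \<bullet> k < \<nu> \<bullet> p" using assms(3) by blast
  then have "\<nu> \<noteq> 0" by auto
  moreover have "\<nu> \<bullet> u = 0" using proj_perp_orthogonal[OF assms(4)] by (simp add: \<nu>_def)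
  ultimately show ?thesis using that by blast
qed

lemma orthogonal_support_of_line_avoiding_interior:
  fixes K :: "'a::euclidean_space set"
  assumes "convex K" "closed K" "interior K \<noteq> {}" "\<forall>r. x + r *\<^sub>R u \<notin> interior K"
  obtains \<nu> where "\<nu> \<noteq> 0" "\<nu> \<bullet> u = 0" "\<forall>k\<in>K. \<nu> \<bullet> k \<le> \<nu> \<bullet> x"
proof -
  define l where "l = range (\<lambda>r. x + r *\<^sub>R u)"
  have "convex l"
    using convex_translation[OF convex_linear_image[OF linear_scaleR_left convex_UNIV], of x u]
    by (simp add: l_def image_image)
  moreover have "interior K \<inter> l = {}" "l \<noteq> {}" using assms(4) by (auto simp: l_def)
  ultimately obtain a b where ab: "a \<noteq> 0" "\<forall>v\<in>interior K. a \<bullet> v \<le> b" "\<forall>v\<in>l. b \<le> a \<bullet> v"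
    using separating_hyperplane_sets[OF convex_interior[OF assms(1)] _ assms(3)] by blast
  have "a \<bullet> u = 0"
  proof (rule ccontr)
    assume "a \<bullet> u \<noteq> 0"
    then have "a \<bullet> (x + ((b - a \<bullet> x - 1) / (a \<bullet> u)) *\<^sub>R u) = b - 1" by (simp add: inner_add_right)
    moreover have "b \<le> a \<bullet> (x + ((b - a \<bullet> x - 1) / (a \<bullet> u)) *\<^sub>R u)" using ab(3) by (simp add: l_def)
    ultimately show False by linarith
  qed
  moreover have "K \<subseteq> {v. a \<bullet> v \<le> b}"
  proof -
    have "closure (interior K) \<subseteq> {v. a \<bullet> v \<le> b}"
      using ab(2) by (intro closure_minimal) (auto simp: closed_halfspace_le)
    then show ?thesis
      using convex_closure_interior[OF assms(1,3)] closure_closed[OF assms(2)] by simp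
  qed
  moreover have "b \<le> a \<bullet> (x + 0 *\<^sub>R u)" using ab(3) unfolding l_def by blast
  ultimately have "\<forall>k\<in>K. a \<bullet> k \<le> a \<bullet> x" by auto
  then show ?thesis using that ab(1) \<open>a \<bullet> u = 0\<close> by blast
qed

lemma separating_cball_beyond_support:
  fixes K :: "'a::euclidean_space set"
  assumes "ball_body K" "K \<noteq> {}" "bounded K" "norm u = 1" "\<nu> \<noteq> 0" "\<nu> \<bullet> u = 0"
    and "\<forall>k\<in>K. \<nu> \<bullet> k \<le> \<nu> \<bullet> p" "p \<bullet> u \<noteq> 0 \<or> (\<forall>k\<in>K. \<nu> \<bullet> k < \<nu> \<bullet> p)"
  shows "\<exists>c. steiner u K \<subseteq> cball c 1 \<and> p \<notin> cball c 1"
proof -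
  define n where "n = sgn \<nu>"
  have n: "norm n = 1" "n \<bullet> u = 0" using assms(5,6) by (simp_all add: n_def sgn_div_norm norm_sgn)
  have scale: "n \<bullet> a \<le> n \<bullet> b \<longleftrightarrow> \<nu> \<bullet> a \<le> \<nu> \<bullet> b" "n \<bullet> a < n \<bullet> b \<longleftrightarrow> \<nu> \<bullet> a < \<nu> \<bullet> b" for a b
    using assms(5) by (simp_all add: n_def sgn_div_norm divide_le_cancel divide_less_cancel)
  have "compact K" by (rule ball_body_compact[OF assms(1,3)])
  moreover have "continuous_on K (\<lambda>k. n \<bullet> k)" by (intro continuous_intros)
  ultimately obtain q where q: "q \<in> K" "\<forall>k\<in>K. n \<bullet> k \<le> n \<bullet> q"
    using continuous_attains_sup[OF _ assms(2)] by blast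
  have "K \<subseteq> cball (q - n) 1" by (rule ball_body_subset_supporting_cball[OF assms(1) q(1) n(1) q(2)])
  moreover have "proj_perp u (q - n) = proj_perp u q - n"
    using n(2) by (simp add: proj_perp_def inner_diff_left)
  ultimately have "steiner u K \<subseteq> cball (proj_perp u q - n) 1"
    using steiner_subset_cball[OF \<open>compact K\<close> ball_body_convex[OF assms(1)] assms(4)] by metis
  moreover have "p \<notin> cball (proj_perp u q - n) 1"
  proof (rule notin_cball_proj_perp_shifted[OF assms(4) n])
    show "n \<bullet> q \<le> n \<bullet> p" using assms(7) q(1) by (simp add: scale)
    show "p \<bullet> u \<noteq> 0 \<or> n \<bullet> q < n \<bullet> p" using assms(8) q(1) by (auto simp: scale)
  qed
  ultimately show ?thesis by blast
qed

lemma separating_cball_outside_projection: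
  fixes K :: "'a::euclidean_space set"
  assumes "ball_body K" "K \<noteq> {}" "bounded K" "norm u = 1" "proj_perp u p \<notin> proj_perp u ` K"
  shows "\<exists>c. steiner u K \<subseteq> cball c 1 \<and> p \<notin> cball c 1"
proof -
  obtain \<nu> where "\<nu> \<noteq> 0" "\<nu> \<bullet> u = 0" "\<forall>k\<in>K. \<nu> \<bullet> k < \<nu> \<bullet> p"
    using orthogonal_support_outside_projection ball_body_compact[OF assms(1,3)]
      ball_body_convex[OF assms(1)] assms(2,4,5) by blast
  then show ?thesis
    using separating_cball_beyond_support[OF assms(1-4)] by (meson less_imp_le)
qed

lemma separating_cball_at_point_chord:
  fixes K :: "'a::euclidean_space set"
  assumes "ball_body K" "bounded K" "norm u = 1" "p \<notin> steiner u K"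
    and "{r. proj_perp u p + r *\<^sub>R u \<in> K} = {s}"
  shows "\<exists>c. steiner u K \<subseteq> cball c 1 \<and> p \<notin> cball c 1"
proof (cases "\<exists>q. K = {q}")
  case True
  then show ?thesis
    using steiner_singleton[OF assms(3)] ball_body_singleton assms(4)
    unfolding ball_body_iff_cballs_separate by metis
next
  case False
  define x where "x = proj_perp u p"
  have "x + s *\<^sub>R u \<in> K" using assms(5) by (auto simp: x_def)
  with False obtain k where "k \<in> K" "k \<noteq> x + s *\<^sub>R u" by blast
  then have "interior K \<noteq> {}"
    using ball_body_interior_nonempty[OF assms(1) \<open>x + s *\<^sub>R u \<in> K\<close>] by blast
  moreover have "u \<noteq> 0" using assms(3) by auto
  then have "\<forall>r. x + r *\<^sub>R u \<notin> interior K"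
    unfolding x_def using line_disjoint_interior_if_point_chord[OF _ assms(5)] by blast
  ultimately obtain \<nu> where \<nu>: "\<nu> \<noteq> 0" "\<nu> \<bullet> u = 0" "\<forall>k\<in>K. \<nu> \<bullet> k \<le> \<nu> \<bullet> x"
    using orthogonal_support_of_line_avoiding_interior ball_body_convex[OF assms(1)]
      ball_body_closed[OF assms(1)] by blast
  have "\<nu> \<bullet> x = \<nu> \<bullet> p" using \<nu>(2) by (simp add: x_def proj_perp_def inner_diff_right)
  moreover have "p \<bullet> u \<noteq> 0"
  proof
    have "x \<in> proj_perp u ` K"
      using proj_perp_mem_image_of_line[OF assms(3)] \<open>x + s *\<^sub>R u \<in> K\<close> by (simp add: x_def)
    moreover have "chord_lo K u x = chord_hi K u x"
      using assms(5) by (simp add: chord_lo_def chord_hi_def x_def)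
    moreover assume "p \<bullet> u = 0"
    ultimately show False using assms(4) unfolding mem_steiner_iff[OF assms(3)] x_def by simp
  qed
  ultimately show ?thesis
    using separating_cball_beyond_support[OF assms(1) _ assms(2,3) \<nu>(1,2)] \<nu>(3) \<open>x + s *\<^sub>R u \<in> K\<close>
    by auto
qed

lemma separating_cball_within_lens:
  fixes K :: "'a::euclidean_space set" and z w :: 'a
  defines "L \<equiv> cball z 1 \<inter> cball w 1"
  assumes "compact K" "convex K" "norm u = 1" "p \<notin> steiner u K"
    and "{r. proj_perp u p + r *\<^sub>R u \<in> K} = {s..t}" "s < t"
    and "K \<subseteq> L" "proj_perp u p + s *\<^sub>R u \<in> frontier L" "proj_perp u p + t *\<^sub>R u \<in> frontier L"
    and "ball_body (steiner u L)"
  shows "\<exists>c. steiner u K \<subseteq> cball c 1 \<and> p \<notin> cball c 1"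
proof -
  define x where "x = proj_perp u p"
  have "u \<noteq> 0" using assms(4) by auto
  have chord_L: "{r. x + r *\<^sub>R u \<in> L} = {s..t}"
    unfolding L_def x_def by (rule chord_of_lens[OF \<open>u \<noteq> 0\<close> assms(7) assms(9,10)[unfolded L_def]])
  have "s \<in> {r. proj_perp u p + r *\<^sub>R u \<in> K}" unfolding assms(6) using assms(7) by simp
  then have "x \<in> proj_perp u ` K"
    unfolding x_def by (intro proj_perp_mem_image_of_line[OF assms(4)]) simp
  have "chord_lo K u x = chord_lo L u x" "chord_hi K u x = chord_hi L u x"
    using assms(6) chord_L by (simp_all add: chord_lo_def chord_hi_def x_def)
  then have "p \<notin> steiner u L"
    using assms(5,8) \<open>x \<in> proj_perp u ` K\<close> unfolding mem_steiner_iff[OF assms(4)] x_def[symmetric] by auto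
  moreover have "steiner u K \<subseteq> steiner u L"
    using steiner_mono[OF assms(8,2,3) _ _ assms(4)] by (simp add: L_def compact_Int convex_Int)
  ultimately show ?thesis using assms(11) unfolding ball_body_iff_cballs_separate by blast
qed

theorem proposition4p2:
  fixes K :: "'a::euclidean_space set" and u :: 'a
  assumes "ball_body K" and "K \<noteq> {}" and "bounded K"
    and "norm u = 1"
    and "\<forall>x\<in>proj_perp u ` K. \<forall>s t.
           K \<inter> {x + r *\<^sub>R u | r. True} = closed_segment (x + s *\<^sub>R u) (x + t *\<^sub>R u) \<and> s \<le> t
           \<longrightarrow> (\<exists>z w. K \<subseteq> cball z 1 \<inter> cball w 1
                 \<and> x + t *\<^sub>R u \<in> frontier (cball z 1 \<inter> cball w 1)
                 \<and> x + s *\<^sub>R u \<in> frontier (cball z 1 \<inter> cball w 1)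
                 \<and> ball_body (steiner u (cball z 1 \<inter> cball w 1)))"
  shows "ball_body (steiner u K)"
  unfolding ball_body_iff_cballs_separate
proof (intro allI impI)
  fix p assume p: "p \<notin> steiner u K"
  have K: "compact K" "convex K" using ball_body_compact ball_body_convex assms(1,3) by auto
  define x where "x = proj_perp u p"
  from K assms(4) show "\<exists>c. steiner u K \<subseteq> cball c 1 \<and> p \<notin> cball c 1"
  proof (cases rule: line_section_cases[where x = x])
    case outside
    then show ?thesis using separating_cball_outside_projection[OF assms(1-4)] by (simp add: x_def)
  next
    case (point s)
    then show ?thesis using separating_cball_at_point_chord[OF assms(1,3,4) p] by (simp add: x_def)
  next
    case (segment s t)
    then obtain z w where "K \<subseteq> cball z 1 \<inter> cball w 1"
      "x + t *\<^sub>R u \<in> frontier (cball z 1 \<inter> cball w 1)" "x + s *\<^sub>R u \<in> frontier (cball z 1 \<inter> cball w 1)"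
      "ball_body (steiner u (cball z 1 \<inter> cball w 1))"
      using assms(5)[rule_format, OF segment(1), of s t] less_imp_le[OF segment(3)]
        Int_line_eq_closed_segment[OF segment(2) less_imp_le[OF segment(3)]] by blast
    then show ?thesis using separating_cball_within_lens[OF K assms(4) p] segment by (simp add: x_def)
  qed
qed

end
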